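(* Let $V$ be a set and $(\mathcal{H}_\ell)_{\ell\in\mathbb{Z}}$ a hypergraph chain over $V$ with Colorful Helly Number $k$. Let $S\subset V$ be a finite subset with $|S|=n$, where $n$ is sufficiently large (in terms of $k$). If for some $t\in\mathbb{Z}$ and $c\in(0,1)$ the inequality $\omega_k(\mathcal{H}_{t+1}|_S)\le cn/2$ holds, then for any $i\in\{1,\dots,k\}$ and any family $\mathcal{F}_i\subset\binom{S}{i}$ with $|\mathcal{F}_i|\ge c\binom{n}{i}$, there exist a family $\mathcal{F}_{i-1}\subset\binom{S}{i-1}$ and a set $M\in\binom{S}{k}\setminus\mathcal{H}_t$ such that $|\mathcal{F}_{i-1}|\ge\left(\frac{c}{12k^2}\right)^k\binom{n}{i-1}$ and $A\cup\{v\}\in\mathcal{F}_i$ for all $A\in\mathcal{F}_{i-1}$ and all $v\in M$.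
   Context: A hypergraph on $V$ is a family $\mathcal{H}\subset 2^V$; it is downwards closed if $H\in\mathcal{H}$, $G\subset H$ imply $G\in\mathcal{H}$. A hypergraph chain over $V$ is a sequence $(\mathcal{H}_\ell)_{\ell\in\mathbb{Z}}$ of downwards closed hypergraphs on $V$ with $\mathcal{H}_\ell\subset\mathcal{H}_{\ell+1}$. For $S_1,\dots,S_k\subset V$, $F\subset V$ is a colorful selection if there is a surjection $\phi:\{1,\dots,k\}\to F$ with $\phi(i)\in S_i$; these form $S_1\otimes\dots\otimes S_k$. The chain has Colorful Helly Number $k$ if for all finite $S_1,\dots,S_k\subset V$ and $\ell$ with $S_1\otimes\dots\otimes S_k\subset\mathcal{H}_\ell$, some $S_j\in\mathcal{H}_{\ell+1}$. $\binom{S}{i}$ denotes the set of $i$-element subsets of $S$. For a hypergraph $\mathcal{H}$ and finite $S$, $\omega_k(\mathcal{H}|_S)$ is the largest size of $K\subset S$ with $\binom{K}{k}\subset\mathcal{H}$. *)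

theory Defs
  imports Complex_Main
begin

definition downwards_closed :: "'a set set \<Rightarrow> bool" where
  "downwards_closed \<H> \<longleftrightarrow> (\<forall>H \<in> \<H>. \<forall>G. G \<subseteq> H \<longrightarrow> G \<in> \<H>)"

definition hypergraph_chain :: "'a set \<Rightarrow> (int \<Rightarrow> 'a set set) \<Rightarrow> bool" where
  "hypergraph_chain V \<H> \<longleftrightarrow>
     (\<forall>l. \<H> l \<subseteq> Pow V \<and> downwards_closed (\<H> l) \<and> \<H> l \<subseteq> \<H> (l + 1))"

definition colorful_selections :: "nat \<Rightarrow> (nat \<Rightarrow> 'a set) \<Rightarrow> 'a set set" where
  "colorful_selections k S =
     {F. \<exists>\<phi>. \<phi> ` {1..k} = F \<and> (\<forall>i\<in>{1..k}. \<phi> i \<in> S i)}"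

definition colorful_helly_number :: "'a set \<Rightarrow> (int \<Rightarrow> 'a set set) \<Rightarrow> nat \<Rightarrow> bool" where
  "colorful_helly_number V \<H> k \<longleftrightarrow>
     (\<forall>S :: nat \<Rightarrow> 'a set. \<forall>l :: int.
        (\<forall>i\<in>{1..k}. finite (S i) \<and> S i \<subseteq> V) \<longrightarrow>
        colorful_selections k S \<subseteq> \<H> l \<longrightarrow>
        (\<exists>j\<in>{1..k}. S j \<in> \<H> (l + 1)))"

definition subsets_of_card :: "'a set \<Rightarrow> nat \<Rightarrow> 'a set set" where
  "subsets_of_card S i = {A. A \<subseteq> S \<and> card A = i}"

definition restrict_hg :: "'a set set \<Rightarrow> 'a set \<Rightarrow> 'a set set" where
  "restrict_hg \<H> S = {A \<in> \<H>. A \<subseteq> S}"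

definition omega :: "nat \<Rightarrow> 'a set set \<Rightarrow> 'a set \<Rightarrow> nat" where
  "omega k \<H> S = Max {card K | K. K \<subseteq> S \<and> subsets_of_card K k \<subseteq> \<H>}"

end

theory Submission
  imports Defs "HOL-Analysis.Convex"
begin

(* For an (i-1)-set A let link F A be the set of v with A + v in F; double counting gives
   sum_A |link F A| = i |F| >= c (n - i + 1) binom(n, i-1).  Since omega_k(H_{t+1}|S) <= cn/2,
   a link of size l contains greedily about (l - cn/2)/k pairwise disjoint k-sets outside H_{t+1},
   and by the colorful Helly property any k of them have a transversal k-set outside H_t, which
   determines the k sets it meets.  So a link carrying m disjoint non-edges contains at least
   binom(m, k) k-sets of binom(S, k) - H_t, and convexity of m -> binom(m, k) turns the average
   bound on the links into binom(n, i-1) (cn / 12k^2)^k incidences between (i-1)-sets and such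
   k-sets M with M in the link.  Averaging over the at most n^k candidates M gives the theorem.
   When cn < 6k^2 the required number of (i-1)-sets is at most one, and a single link of size
   more than cn/2 already contains a suitable M. *)

lemma finite_subsets_of_card [simp]: "finite S \<Longrightarrow> finite (subsets_of_card S k)"
  unfolding subsets_of_card_def by (rule finite_subset[of _ "Pow S"]) auto

lemma card_subsets_of_card: "finite S \<Longrightarrow> card (subsets_of_card S k) = card S choose k"
  by (simp add: subsets_of_card_def n_subsets)

lemma sum_card_incidences_swap:
  "finite A \<Longrightarrow> finite B \<Longrightarrow> (\<Sum>a\<in>A. card {b\<in>B. R a b}) = (\<Sum>b\<in>B. card {a\<in>A. R a b})"
  using sum.swap_restrict[of A B "\<lambda>_ _. 1::nat" R] by simp

lemma exists_ge_of_card_mul_le_sum: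
  fixes f :: "'b \<Rightarrow> real"
  assumes "0 < sum f B" and "real (card B) * x \<le> sum f B"
  shows "\<exists>b\<in>B. x \<le> f b"
proof (rule ccontr)
  assume "\<not> ?thesis"
  then have less: "\<And>b. b \<in> B \<Longrightarrow> f b < x" by (simp add: not_le)
  have "finite B" "B \<noteq> {}"
    using assms(1) by (metis less_irrefl sum.infinite, metis less_irrefl sum.empty)
  then have "sum f B < real (card B) * x"
    by (intro sum_bounded_above_strict) (use less in \<open>auto simp: card_gt_0_iff\<close>)
  then show False using assms(2) by simp
qed

lemma card_mul_power_mean_le_sum_power:
  fixes x :: "'b \<Rightarrow> real"
  assumes "finite I" "I \<noteq> {}" "\<And>i. i \<in> I \<Longrightarrow> 0 \<le> x i"
  shows "real (card I) * (sum x I / real (card I)) ^ k \<le> (\<Sum>i\<in>I. x i ^ k)"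
proof -
  have "convex_on {0..} (\<lambda>x::real. x ^ k)"
    by (cases "even k") (auto intro: convex_on_subset[OF convex_power_even] convex_power_odd)
  moreover have card_pos: "0 < real (card I)" using assms(1,2) by (simp add: card_gt_0_iff)
  ultimately have "(\<Sum>i\<in>I. (1 / real (card I)) *\<^sub>R x i) ^ k \<le> (\<Sum>i\<in>I. 1 / real (card I) * x i ^ k)"
    using assms by (intro convex_on_sum) auto
  then show ?thesis
    using card_pos by (simp add: field_simps flip: sum_distrib_left sum_divide_distrib)
qed

lemma card_mul_power_le_sum_choose:
  assumes "finite I" "I \<noteq> {}" "0 < k" "0 \<le> \<mu>"
    and mean: "\<mu> \<le> (\<Sum>i\<in>I. real (m i)) / real (card I) - real k"
  shows "real (card I) * (\<mu> / real k) ^ k \<le> (\<Sum>i\<in>I. real (m i choose k))"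
proof -
  define x where "x i = max 0 (real (m i) - real k) / real k" for i
  have x_nonneg: "0 \<le> x i" for i by (simp add: x_def)
  have x_pow_le: "x i ^ k \<le> real (m i choose k)" for i
  proof (cases "k \<le> m i")
    case True
    have "x i \<le> real (m i) / real k" unfolding x_def using True by (simp add: divide_right_mono)
    then have "x i ^ k \<le> (real (m i) / real k) ^ k" by (intro power_mono x_nonneg)
    also have "\<dots> \<le> real (m i choose k)" by (rule binomial_ge_n_over_k_pow_k[OF True])
    finally show ?thesis .
  qed (use \<open>0 < k\<close> in \<open>simp add: x_def power_0_left\<close>)
  have card_pos: "0 < real (card I)" using assms(1,2) by (simp add: card_gt_0_iff)
  have "(\<Sum>i\<in>I. real (m i) - real k) \<le> (\<Sum>i\<in>I. real k * x i)"
    using \<open>0 < k\<close> by (intro sum_mono) (simp add: x_def)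
  then have "(\<Sum>i\<in>I. real (m i)) \<le> real k * sum x I + real k * real (card I)"
    by (simp add: sum_subtractf algebra_simps flip: sum_distrib_left)
  then have "(\<Sum>i\<in>I. real (m i)) / real (card I)
      \<le> (real k * sum x I + real k * real (card I)) / real (card I)"
    using card_pos by (simp add: divide_right_mono)
  also have "\<dots> = real k * (sum x I / real (card I)) + real k"
    using card_pos by (simp add: add_divide_distrib)
  finally have "\<mu> \<le> real k * (sum x I / real (card I))"
    using mean by linarith
  then have "\<mu> / real k \<le> sum x I / real (card I)"
    using \<open>0 < k\<close> by (simp add: pos_divide_le_eq mult.commute)
  then have "real (card I) * (\<mu> / real k) ^ k \<le> real (card I) * (sum x I / real (card I)) ^ k"
    using \<open>0 \<le> \<mu>\<close> by (intro mult_left_mono power_mono) auto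
  also have "\<dots> \<le> (\<Sum>i\<in>I. x i ^ k)"
    using assms(1,2) x_nonneg by (rule card_mul_power_mean_le_sum_power)
  also have "\<dots> \<le> (\<Sum>i\<in>I. real (m i choose k))"
    by (intro sum_mono x_pow_le)
  finally show ?thesis .
qed

lemma power_mul_choose_le_power:
  assumes "r \<le> k" "0 < n" "0 \<le> x"
  shows "x ^ k * real (n choose r) \<le> (x * real n) ^ k"
proof -
  have "n choose r \<le> n ^ k"
  proof (cases "r \<le> n")
    case True
    then have "n choose r \<le> n ^ r" by (rule binomial_le_pow)
    also have "\<dots> \<le> n ^ k" using assms(1,2) by (simp add: power_increasing)
    finally show ?thesis .
  qed (use assms(2) in \<open>simp add: binomial_eq_0\<close>)
  then have "real (n choose r) \<le> real n ^ k" by (metis of_nat_le_iff of_nat_power)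
  then show ?thesis using assms(3) by (simp add: mult_left_mono power_mult_distrib)
qed

lemma exists_non_edge_if_omega_less:
  assumes "finite S" "Y \<subseteq> S" "omega k (restrict_hg H S) S < card Y"
  shows "\<exists>T\<subseteq>Y. card T = k \<and> T \<notin> H"
proof (rule ccontr)
  assume "\<not> ?thesis"
  then have "subsets_of_card Y k \<subseteq> restrict_hg H S"
    using assms(2) by (auto simp: subsets_of_card_def restrict_hg_def)
  moreover have "finite {card K |K. K \<subseteq> S \<and> subsets_of_card K k \<subseteq> restrict_hg H S}"
    by (rule finite_subset[of _ "{..card S}"]) (auto intro: card_mono assms(1))
  ultimately have "card Y \<le> omega k (restrict_hg H S) S"
    unfolding omega_def using assms(2) by (intro Max_ge) auto
  then show False using assms(3) by simp
qed

lemma exists_disjoint_packing: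
  assumes "finite X" "0 < k"
    and large: "\<And>Y. Y \<subseteq> X \<Longrightarrow> w < real (card Y) \<Longrightarrow> \<exists>T\<subseteq>Y. card T = k \<and> P T"
  shows "\<exists>MM. finite MM \<and> pairwise disjnt MM \<and> (\<forall>M\<in>MM. M \<subseteq> X \<and> card M = k \<and> P M)
           \<and> real (card X) \<le> w + real k * real (card MM)"
  using assms(1) large
proof (induction X rule: finite_psubset_induct)
  case (psubset X)
  show ?case
  proof (cases "w < real (card X)")
    case False
    then show ?thesis by (intro exI[of _ "{}"]) auto
  next
    case True
    then obtain T where T: "T \<subseteq> X" "card T = k" "P T" using psubset.prems by blast
    then have "T \<noteq> {}" using \<open>0 < k\<close> by auto
    then have "X - T \<subset> X" using T(1) by blast
    then have "\<exists>MM. finite MM \<and> pairwise disjnt MM \<and> (\<forall>M\<in>MM. M \<subseteq> X - T \<and> card M = k \<and> P M)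
        \<and> real (card (X - T)) \<le> w + real k * real (card MM)"
      by (rule psubset.IH) (use psubset.prems in blast)
    then obtain MM where MM: "finite MM" "pairwise disjnt MM"
        "\<forall>M\<in>MM. M \<subseteq> X - T \<and> card M = k \<and> P M"
        "real (card (X - T)) \<le> w + real k * real (card MM)"
      by blast
    have "T \<notin> MM" using MM(3) \<open>T \<noteq> {}\<close> by blast
    moreover have "real (card (X - T)) = real (card X) - real k"
      using T psubset.hyps card_mono[OF psubset.hyps T(1)]
      by (simp add: card_Diff_subset finite_subset of_nat_diff)
    moreover have "pairwise disjnt (insert T MM)"
      using MM(2,3) by (auto simp: pairwise_insert disjnt_def)
    ultimately show ?thesis
      using MM T by (intro exI[of _ "insert T MM"]) (auto simp: algebra_simps)
  qed
qed

lemma colorful_helly_transversal: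
  assumes helly: "colorful_helly_number V H k"
    and K: "finite K" "card K = k" "pairwise disjnt K"
    and members: "\<And>M. M \<in> K \<Longrightarrow> finite M \<and> M \<subseteq> V \<and> M \<notin> H (l + 1)"
  shows "\<exists>T. T \<subseteq> \<Union>K \<and> card T = k \<and> T \<notin> H l \<and> (\<forall>M\<in>K. M \<inter> T \<noteq> {})"
proof -
  obtain h where h: "bij_betw h {1..k} K"
    using ex_bij_betw_nat_finite_1[OF K(1)] K(2) by auto
  then have h_in: "h j \<in> K" if "j \<in> {1..k}" for j
    using that bij_betwE by blast
  have "\<not> colorful_selections k h \<subseteq> H l"
    using helly members h_in unfolding colorful_helly_number_def by meson
  then obtain \<phi> where \<phi>: "\<phi> ` {1..k} \<notin> H l" "\<forall>j\<in>{1..k}. \<phi> j \<in> h j"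
    unfolding colorful_selections_def by blast
  have "inj_on \<phi> {1..k}"
  proof (rule inj_onI)
    fix a b assume ab: "a \<in> {1..k}" "b \<in> {1..k}" "\<phi> a = \<phi> b"
    then have "\<not> disjnt (h a) (h b)"
      using \<phi>(2) by (metis disjnt_iff)
    then have "h a = h b"
      using K(3) h_in ab(1,2) by (meson pairwiseD)
    then show "a = b"
      using h ab(1,2) by (meson bij_betw_imp_inj_on inj_onD)
  qed
  moreover have "\<forall>M\<in>K. M \<inter> \<phi> ` {1..k} \<noteq> {}"
    using h \<phi>(2) by (metis IntI bij_betw_imp_surj_on empty_iff imageE imageI)
  moreover have "\<phi> ` {1..k} \<subseteq> \<Union>K"
    using \<phi>(2) h_in by blast
  ultimately show ?thesis
    using \<phi>(1) by (intro exI[of _ "\<phi> ` {1..k}"]) (simp add: card_image)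
qed

lemma card_subsets_le_card_transversals:
  assumes helly: "colorful_helly_number V H k"
    and MM: "finite MM" "pairwise disjnt MM"
    and members: "\<And>M. M \<in> MM \<Longrightarrow> finite M \<and> M \<subseteq> V \<and> M \<notin> H (l + 1)"
  shows "card MM choose k \<le> card {T \<in> subsets_of_card (\<Union>MM) k. T \<notin> H l}"
proof -
  define touched where "touched T = {M\<in>MM. M \<inter> T \<noteq> {}}" for T
  let ?transversals = "{T \<in> subsets_of_card (\<Union>MM) k. T \<notin> H l}"
  have "subsets_of_card MM k \<subseteq> touched ` ?transversals"
  proof
    fix K assume "K \<in> subsets_of_card MM k"
    then have K: "K \<subseteq> MM" "card K = k" by (auto simp: subsets_of_card_def)
    have "\<exists>T. T \<subseteq> \<Union>K \<and> card T = k \<and> T \<notin> H l \<and> (\<forall>M\<in>K. M \<inter> T \<noteq> {})"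
      using finite_subset[OF K(1) MM(1)] K(2) pairwise_subset[OF MM(2) K(1)]
      by (rule colorful_helly_transversal[OF helly]) (use K(1) members in blast)
    then obtain T where T: "T \<subseteq> \<Union>K" "card T = k" "T \<notin> H l" "\<forall>M\<in>K. M \<inter> T \<noteq> {}"
      by blast
    have "touched T = K"
    proof
      show "K \<subseteq> touched T" using K(1) T(4) by (auto simp: touched_def)
      show "touched T \<subseteq> K"
      proof
        fix M assume "M \<in> touched T"
        then obtain M' x where "M \<in> MM" "x \<in> M" "M' \<in> K" "x \<in> M'"
          using T(1) unfolding touched_def by blast
        then show "M \<in> K"
          using MM(2) K(1) by (metis disjnt_iff pairwiseD subsetD)
      qed
    qed
    moreover have "T \<in> ?transversals"
      using T K(1) unfolding subsets_of_card_def by blast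
    ultimately show "K \<in> touched ` ?transversals" by blast
  qed
  moreover have "finite ?transversals"
    using MM(1) members by simp
  ultimately have "card (subsets_of_card MM k) \<le> card ?transversals"
    by (meson card_image_le card_mono finite_imageI le_trans)
  then show ?thesis using MM(1) by (simp add: card_subsets_of_card)
qed

lemma large_set_contains_many_non_edges:
  assumes helly: "colorful_helly_number V H k" and "0 < k"
    and S: "finite S" "S \<subseteq> V" and "Y \<subseteq> S"
    and omega: "real (omega k (restrict_hg (H (t + 1)) S) S) \<le> w"
  shows "\<exists>m. real (card Y) \<le> w + real k * real m
           \<and> m choose k \<le> card {T \<in> subsets_of_card S k - H t. T \<subseteq> Y}"
proof -
  have "finite Y" using S(1) \<open>Y \<subseteq> S\<close> by (rule finite_subset[rotated])
  have large: "\<exists>T\<subseteq>Z. card T = k \<and> T \<notin> H (t + 1)" if "Z \<subseteq> Y" "w < real (card Z)" for Z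
    by (rule exists_non_edge_if_omega_less[OF S(1)]) (use that \<open>Y \<subseteq> S\<close> omega in auto)
  obtain MM where MM: "finite MM" "pairwise disjnt MM"
      "\<forall>M\<in>MM. M \<subseteq> Y \<and> card M = k \<and> M \<notin> H (t + 1)"
      "real (card Y) \<le> w + real k * real (card MM)"
    using exists_disjoint_packing[where P = "\<lambda>T. T \<notin> H (t + 1)", OF \<open>finite Y\<close> \<open>0 < k\<close> large]
    by blast
  have "\<Union>MM \<subseteq> Y" using MM(3) by blast
  have "card MM choose k \<le> card {T \<in> subsets_of_card (\<Union>MM) k. T \<notin> H t}"
    using MM(1,2) by (rule card_subsets_le_card_transversals[OF helly])
      (use MM(3) \<open>Y \<subseteq> S\<close> S \<open>finite Y\<close> in \<open>auto intro: finite_subset\<close>)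
  also have "\<dots> \<le> card {T \<in> subsets_of_card S k - H t. T \<subseteq> Y}"
  proof (rule card_mono)
    show "{T \<in> subsets_of_card (\<Union>MM) k. T \<notin> H t} \<subseteq> {T \<in> subsets_of_card S k - H t. T \<subseteq> Y}"
      using \<open>\<Union>MM \<subseteq> Y\<close> \<open>Y \<subseteq> S\<close> unfolding subsets_of_card_def by blast
  qed (simp add: S(1))
  finally show ?thesis
    using MM(4) by blast
qed

(* No condition v \<notin> A is needed: if F consists of (card A + 1)-sets it holds automatically. *)
definition link :: "'a set set \<Rightarrow> 'a set \<Rightarrow> 'a set" where
  "link F A = {v. insert v A \<in> F}"

lemma link_subset: "F \<subseteq> subsets_of_card S i \<Longrightarrow> link F A \<subseteq> S"
  by (auto simp: link_def subsets_of_card_def)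

lemma card_link:
  assumes F: "F \<subseteq> subsets_of_card S (Suc j)" and "finite S" and A: "A \<in> subsets_of_card S j"
  shows "card (link F A) = card {B \<in> F. A \<subseteq> B}"
proof -
  have "finite A" using A \<open>finite S\<close> by (auto simp: subsets_of_card_def intro: finite_subset)
  have notin: "v \<notin> A" if "v \<in> link F A" for v
    using that F A by (auto simp: link_def subsets_of_card_def insert_absorb)
  have "bij_betw (\<lambda>v. insert v A) (link F A) {B \<in> F. A \<subseteq> B}"
  proof (rule bij_betw_imageI)
    show "inj_on (\<lambda>v. insert v A) (link F A)"
      using notin by (auto intro!: inj_onI simp: insert_ident)
    show "(\<lambda>v. insert v A) ` link F A = {B \<in> F. A \<subseteq> B}"
    proof
      show "(\<lambda>v. insert v A) ` link F A \<subseteq> {B \<in> F. A \<subseteq> B}"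
        by (auto simp: link_def)
      show "{B \<in> F. A \<subseteq> B} \<subseteq> (\<lambda>v. insert v A) ` link F A"
      proof
        fix B assume B: "B \<in> {B \<in> F. A \<subseteq> B}"
        then have "card (B - A) = 1"
          using F A \<open>finite A\<close> by (auto simp: subsets_of_card_def card_Diff_subset)
        then obtain v where "B - A = {v}" by (auto simp: card_Suc_eq)
        then have "B = insert v A" using B by blast
        then show "B \<in> (\<lambda>v. insert v A) ` link F A"
          using B by (auto simp: link_def)
      qed
    qed
  qed
  then show ?thesis by (rule bij_betw_same_card)
qed

lemma sum_card_link:
  assumes "finite S" and F: "F \<subseteq> subsets_of_card S (Suc j)"
  shows "(\<Sum>A\<in>subsets_of_card S j. card (link F A)) = Suc j * card F"
proof -
  have "finite F" using F \<open>finite S\<close> by (rule finite_subset[OF _ finite_subsets_of_card])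
  have "(\<Sum>A\<in>subsets_of_card S j. card (link F A)) = (\<Sum>A\<in>subsets_of_card S j. card {B \<in> F. A \<subseteq> B})"
    using assms by (intro sum.cong card_link) auto
  also have "\<dots> = (\<Sum>B\<in>F. card {A \<in> subsets_of_card S j. A \<subseteq> B})"
    using \<open>finite S\<close> \<open>finite F\<close> by (intro sum_card_incidences_swap) auto
  also have "\<dots> = (\<Sum>B\<in>F. Suc j)"
  proof (rule sum.cong)
    fix B assume "B \<in> F"
    then have B: "B \<subseteq> S" "card B = Suc j" using F by (auto simp: subsets_of_card_def)
    then have "{A \<in> subsets_of_card S j. A \<subseteq> B} = subsets_of_card B j"
      by (auto simp: subsets_of_card_def)
    then show "card {A \<in> subsets_of_card S j. A \<subseteq> B} = Suc j"
      using B \<open>finite S\<close> by (simp add: card_subsets_of_card finite_subset)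
  qed simp
  finally show ?thesis by simp
qed

lemma sum_card_link_ge:
  assumes "finite S" "card S = n" and F: "F \<subseteq> subsets_of_card S (Suc j)"
    and card_F: "c * real (n choose Suc j) \<le> real (card F)"
  shows "c * (real n - real j) * real (n choose j)
           \<le> (\<Sum>A\<in>subsets_of_card S j. real (card (link F A)))"
proof -
  have "(real n - real j) * real (n choose j) = real (Suc j * (n choose Suc j))"
  proof (cases "j \<le> n")
    case True
    have "Suc j * (n choose Suc j) = (n - j) * (n choose j)"
      by (simp only: binomial_absorption binomial_absorb_comp)
    then show ?thesis using True by (simp add: of_nat_diff)
  qed (simp add: binomial_eq_0)
  also have "c * \<dots> \<le> real (Suc j * card F)"
    using mult_left_mono[OF card_F, of "real (Suc j)"] by (simp add: algebra_simps)
  also have "\<dots> = (\<Sum>A\<in>subsets_of_card S j. real (card (link F A)))"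
    using sum_card_link[OF assms(1) F] by (simp flip: of_nat_sum)
  finally show ?thesis by (simp add: mult.assoc)
qed

context
  fixes V :: "'a set" and H :: "int \<Rightarrow> 'a set set" and k n j :: nat and S :: "'a set"
    and t :: int and c :: real and F :: "'a set set"
  assumes mono: "H t \<subseteq> H (t + 1)" and helly: "colorful_helly_number V H k"
    and S: "S \<subseteq> V" "finite S" "card S = n" and n_large: "4 * k \<le> n"
    and c_pos: "0 < c" and omega: "real (omega k (restrict_hg (H (t + 1)) S) S) \<le> c * real n / 2"
    and j_less: "j < k" and F: "F \<subseteq> subsets_of_card S (Suc j)"
    and card_F: "c * real (n choose Suc j) \<le> real (card F)"
begin

lemma card_subsets_of_card_pos: "0 < card (subsets_of_card S j)"
  using S(2,3) j_less n_large by (simp add: card_subsets_of_card)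

lemma exists_popular_non_edge_small:
  assumes "c * real n < 6 * real k ^ 2"
  shows "\<exists>T\<in>subsets_of_card S k - H t. (c / (12 * real k ^ 2)) ^ k * real (n choose j)
           \<le> real (card {A \<in> subsets_of_card S j. T \<subseteq> link F A})"
proof -
  have "\<exists>A\<in>subsets_of_card S j. c * real n / 2 < real (card (link F A))"
  proof (rule ccontr)
    assume "\<not> ?thesis"
    then have "(\<Sum>A\<in>subsets_of_card S j. real (card (link F A)))
        \<le> real (card (subsets_of_card S j)) * (c * real n / 2)"
      by (intro sum_bounded_above) (simp add: not_less)
    then have "(\<Sum>A\<in>subsets_of_card S j. real (card (link F A))) \<le> real (n choose j) * (c * real n / 2)"
      using S(2,3) by (simp add: card_subsets_of_card)
    moreover have "real (n choose j) * (c * real n / 2) < c * (real n - real j) * real (n choose j)"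
      using card_subsets_of_card_pos S(2,3) c_pos j_less n_large by (simp add: card_subsets_of_card)
    ultimately show False
      using sum_card_link_ge[OF S(2,3) F card_F] by linarith
  qed
  then obtain A where A: "A \<in> subsets_of_card S j" "c * real n / 2 < real (card (link F A))" ..
  have "\<exists>T\<subseteq>link F A. card T = k \<and> T \<notin> H (t + 1)"
    using S(2) link_subset[OF F] by (rule exists_non_edge_if_omega_less) (use omega A(2) in linarith)
  then obtain T where T: "T \<subseteq> link F A" "card T = k" "T \<notin> H (t + 1)"
    by blast
  have T_non_edge: "T \<in> subsets_of_card S k - H t"
    using T mono link_subset[OF F] by (auto simp: subsets_of_card_def)
  have "A \<in> {A \<in> subsets_of_card S j. T \<subseteq> link F A}" using A(1) T(1) by blast
  then have "0 < card {A \<in> subsets_of_card S j. T \<subseteq> link F A}"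
    using S(2) by (auto simp: card_gt_0_iff)
  then have "1 \<le> real (card {A \<in> subsets_of_card S j. T \<subseteq> link F A})"
    by linarith
  moreover have "(c / (12 * real k ^ 2)) ^ k * real (n choose j) \<le> 1"
  proof -
    have "(c / (12 * real k ^ 2)) ^ k * real (n choose j) \<le> (c / (12 * real k ^ 2) * real n) ^ k"
      using j_less n_large c_pos by (intro power_mul_choose_le_power) auto
    also have "\<dots> \<le> 1"
    proof (rule power_le_one)
      have "c * real n \<le> 12 * real k ^ 2"
        using assms zero_le_power2[of "real k"] by linarith
      then show "c / (12 * real k ^ 2) * real n \<le> 1"
        using j_less by (simp add: pos_divide_le_eq)
    qed (use c_pos in simp)
    finally show ?thesis .
  qed
  ultimately show ?thesis using T_non_edge by (meson order_trans)
qed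

lemma mean_packing_size_ge:
  assumes m_link: "\<And>A. real (card (link F A)) \<le> c * real n / 2 + real k * real (m A)"
  shows "c * real n / (4 * real k)
           \<le> (\<Sum>A\<in>subsets_of_card S j. real (m A)) / real (card (subsets_of_card S j))"
proof -
  let ?AA = "subsets_of_card S j"
  have card_AA: "card ?AA = n choose j" using S(2,3) by (simp add: card_subsets_of_card)
  have sum_m: "c * (real n - real j) * real (n choose j)
      \<le> real (n choose j) * (c * real n / 2) + real k * (\<Sum>A\<in>?AA. real (m A))"
  proof -
    have "c * (real n - real j) * real (n choose j) \<le> (\<Sum>A\<in>?AA. real (card (link F A)))"
      by (rule sum_card_link_ge[OF S(2,3) F card_F])
    also have "\<dots> \<le> (\<Sum>A\<in>?AA. c * real n / 2 + real k * real (m A))"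
      by (intro sum_mono m_link)
    finally show ?thesis by (simp add: sum.distrib card_AA flip: sum_distrib_left)
  qed
  have "c * real j \<le> c * (real n / 4)"
    using c_pos j_less n_large by (intro mult_left_mono) auto
  then have "c * real n / 4 \<le> c * (real n - real j) - c * real n / 2"
    by (simp add: right_diff_distrib)
  then have "c * real n / 4 * real (n choose j)
      \<le> (c * (real n - real j) - c * real n / 2) * real (n choose j)"
    by (rule mult_right_mono) simp
  also have "\<dots> = c * (real n - real j) * real (n choose j) - real (n choose j) * (c * real n / 2)"
    by (simp add: algebra_simps)
  also have "\<dots> \<le> real k * (\<Sum>A\<in>?AA. real (m A))"
    using sum_m by linarith
  finally have "c * real n / 4 * real (n choose j) \<le> real k * (\<Sum>A\<in>?AA. real (m A))" .
  then show ?thesis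
    using card_subsets_of_card_pos card_AA j_less by (simp add: field_simps)
qed

lemma sum_popularity_ge:
  assumes large: "6 * real k ^ 2 \<le> c * real n"
  shows "real (n choose j) * (c / (12 * real k ^ 2) * real n) ^ k
           \<le> (\<Sum>T\<in>subsets_of_card S k - H t. real (card {A \<in> subsets_of_card S j. T \<subseteq> link F A}))"
proof -
  let ?AA = "subsets_of_card S j" and ?bad = "subsets_of_card S k - H t"
  have k_pos: "0 < k" using j_less by simp
  have "\<exists>m. real (card (link F A)) \<le> c * real n / 2 + real k * real m
          \<and> m choose k \<le> card {T \<in> ?bad. T \<subseteq> link F A}" for A
    using helly k_pos S(2,1) link_subset[OF F] omega by (rule large_set_contains_many_non_edges)
  then obtain m where m_link: "\<And>A. real (card (link F A)) \<le> c * real n / 2 + real k * real (m A)"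
    and m_choose: "\<And>A. m A choose k \<le> card {T \<in> ?bad. T \<subseteq> link F A}"
    by metis
  have card_AA: "card ?AA = n choose j" using S(2,3) by (simp add: card_subsets_of_card)
  have "c * real n / (4 * real k) \<le> (\<Sum>A\<in>?AA. real (m A)) / real (card ?AA)"
    using m_link by (rule mean_packing_size_ge)
  \<comment> \<open>The loss of k in the binomial bound is absorbed here; this is where 6k^2 \<le> cn enters.\<close>
  moreover have "c * real n / (12 * real k) = c * real n / (4 * real k) - c * real n / (6 * real k)"
    by (simp add: field_simps)
  moreover have "real k \<le> c * real n / (6 * real k)"
    using large k_pos by (simp add: field_simps power2_eq_square)
  ultimately have mean: "c * real n / (12 * real k) \<le> (\<Sum>A\<in>?AA. real (m A)) / real (card ?AA) - real k"
    by linarith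
  have "real (n choose j) * (c / (12 * real k ^ 2) * real n) ^ k
      = real (card ?AA) * (c * real n / (12 * real k) / real k) ^ k"
    by (simp add: card_AA power2_eq_square field_simps)
  also have "\<dots> \<le> (\<Sum>A\<in>?AA. real (m A choose k))"
    using card_subsets_of_card_pos S(2) k_pos c_pos mean
    by (intro card_mul_power_le_sum_choose) auto
  also have "\<dots> \<le> (\<Sum>A\<in>?AA. real (card {T \<in> ?bad. T \<subseteq> link F A}))"
    by (intro sum_mono of_nat_mono m_choose)
  also have "\<dots> = (\<Sum>T\<in>?bad. real (card {A \<in> ?AA. T \<subseteq> link F A}))"
    using sum_card_incidences_swap[of ?AA ?bad "\<lambda>A T. T \<subseteq> link F A"] S(2)
    by (simp flip: of_nat_sum)
  finally show ?thesis .
qed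

lemma exists_popular_non_edge_large:
  assumes large: "6 * real k ^ 2 \<le> c * real n"
  shows "\<exists>T\<in>subsets_of_card S k - H t. (c / (12 * real k ^ 2)) ^ k * real (n choose j)
           \<le> real (card {A \<in> subsets_of_card S j. T \<subseteq> link F A})"
proof -
  let ?bad = "subsets_of_card S k - H t"
  have "card ?bad \<le> n choose k"
    using S(2,3) by (metis Diff_subset card_mono card_subsets_of_card finite_subsets_of_card)
  then have "real (card ?bad) * ((c / (12 * real k ^ 2)) ^ k * real (n choose j))
      \<le> real (n choose k) * ((c / (12 * real k ^ 2)) ^ k * real (n choose j))"
    using c_pos by (intro mult_right_mono) auto
  also have "\<dots> = real (n choose j) * ((c / (12 * real k ^ 2)) ^ k * real (n choose k))"
    by (simp only: mult_ac)
  also have "\<dots> \<le> real (n choose j) * (c / (12 * real k ^ 2) * real n) ^ k"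
    using n_large j_less c_pos by (intro mult_left_mono power_mul_choose_le_power) auto
  also have "\<dots> \<le> (\<Sum>T\<in>?bad. real (card {A \<in> subsets_of_card S j. T \<subseteq> link F A}))"
    by (rule sum_popularity_ge[OF large])
  finally show ?thesis
  proof (rule exists_ge_of_card_mul_le_sum[rotated])
    have "0 < real (n choose j) * (c / (12 * real k ^ 2) * real n) ^ k"
      using card_subsets_of_card_pos S(2,3) c_pos n_large j_less
      by (simp add: card_subsets_of_card)
    then show "0 < (\<Sum>T\<in>?bad. real (card {A \<in> subsets_of_card S j. T \<subseteq> link F A}))"
      using sum_popularity_ge[OF large] by linarith
  qed
qed

lemma exists_popular_non_edge:
  "\<exists>T\<in>subsets_of_card S k - H t. (c / (12 * real k ^ 2)) ^ k * real (n choose j)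
     \<le> real (card {A \<in> subsets_of_card S j. T \<subseteq> link F A})"
  using exists_popular_non_edge_small exists_popular_non_edge_large by fastforce

end

theorem lemma2:
  fixes k :: nat
  shows "\<exists>N :: nat. \<forall>(V :: 'a set) (\<H> :: int \<Rightarrow> 'a set set) (S :: 'a set) (n :: nat)
            (t :: int) (c :: real) (i :: nat) (F :: 'a set set).
     hypergraph_chain V \<H> \<and> colorful_helly_number V \<H> k \<and>
     S \<subseteq> V \<and> finite S \<and> card S = n \<and> n \<ge> N \<and>
     0 < c \<and> c < 1 \<and>
     real (omega k (restrict_hg (\<H> (t + 1)) S) S) \<le> c * real n / 2 \<and>
     i \<in> {1..k} \<and> F \<subseteq> subsets_of_card S i \<and>
     real (card F) \<ge> c * real (n choose i)
     \<longrightarrow>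
     (\<exists>F' M. F' \<subseteq> subsets_of_card S (i - 1) \<and>
        M \<in> subsets_of_card S k - \<H> t \<and>
        real (card F') \<ge> (c / (12 * real k ^ 2)) ^ k * real (n choose (i - 1)) \<and>
        (\<forall>A\<in>F'. \<forall>v\<in>M. A \<union> {v} \<in> F))"
proof (intro exI[of _ "4 * k"] allI impI, elim conjE)
  fix V :: "'a set" and H :: "int \<Rightarrow> 'a set set" and S n t c i F
  assume chain: "hypergraph_chain V H" and helly: "colorful_helly_number V H k"
    and S: "S \<subseteq> V" "finite S" "card S = n" and n_large: "4 * k \<le> n"
    and c_pos: "0 < c" and "c < 1"
    and omega: "real (omega k (restrict_hg (H (t + 1)) S) S) \<le> c * real n / 2"
    and i: "i \<in> {1..k}" and F: "F \<subseteq> subsets_of_card S i"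
    and card_F: "c * real (n choose i) \<le> real (card F)"
  obtain j where j: "i = Suc j" "j < k" using i by (cases i) auto
  have mono: "H t \<subseteq> H (t + 1)" using chain by (simp add: hypergraph_chain_def)
  obtain M where M: "M \<in> subsets_of_card S k - H t"
    and popular: "(c / (12 * real k ^ 2)) ^ k * real (n choose j)
      \<le> real (card {A \<in> subsets_of_card S j. M \<subseteq> link F A})"
    using exists_popular_non_edge[OF mono helly S n_large c_pos omega j(2)] F card_F j(1) by blast
  show "\<exists>F' M. F' \<subseteq> subsets_of_card S (i - 1) \<and> M \<in> subsets_of_card S k - H t \<and>
      (c / (12 * real k ^ 2)) ^ k * real (n choose (i - 1)) \<le> real (card F') \<and>
      (\<forall>A\<in>F'. \<forall>v\<in>M. A \<union> {v} \<in> F)"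
    using M popular j(1) by (intro exI[of _ "{A \<in> subsets_of_card S j. M \<subseteq> link F A}"] exI[of _ M])
      (auto simp: link_def)
qed

end
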